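(* Let $\kappa$ be a regular uncountable limit cardinal, and let $J_\kappa=\{X\subseteq\kappa:\exists f:X\to\kappa\ \exists\theta<\kappa\ (f \text{ is regressive and } |f^{-1}(\{\eta\})|\le\theta \text{ for all }\eta<\kappa)\}$. Then $J_\kappa$ is not prepleasant: with $L'=\{\lambda+1:\lambda<\kappa \text{ an infinite cardinal}\}$ and $A_{\lambda+1}=(\lambda+1,\lambda^+)$ for $\lambda+1\in L'$, one has $L'\in J_\kappa$, each $A_{\lambda+1}$ bounded in $\kappa$, but $L'\cup\bigtriangledown_{\lambda+1\in L'}A_{\lambda+1}\notin J_\kappa$.
   Context: A function $f:X\to\kappa$ with $X\subseteq\kappa$ is regressive if $f(\alpha)<\alpha$ for all $\alpha\in X\setminus\{0\}$. For $A\subseteq\kappa$ and $X_\alpha\subseteq\kappa$, $\bigtriangledown_{\alpha\in A}X_\alpha=\{\xi<\kappa:\exists\alpha<\xi\,(\alpha\in A\wedge \xi\in X_\alpha)\}$. An ideal $I$ on $\kappa$ is prepleasant if for every $Q\in I$ and every sequence $\langle B_\alpha\rangle_{\alpha<\kappa}$ of bounded subsets of $\kappa$, $\bigtriangledown_{\alpha\in Q}B_\alpha\in I$. $(\lambda+1,\lambda^+)$ denotes the open ordinal interval. *)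

theory Defs
  imports Main "HOL-Library.Equipollence" "HOL-Library.Countable_Set"
begin

text \<open>The cardinal kappa is modelled as a well-ordered type 'a whose order type is kappa:
  the elements of 'a are the ordinals below kappa, and an ordinal alpha < kappa is
  identified with its initial segment seg alpha.\<close>

definition seg :: "'a::wellorder \<Rightarrow> 'a set" where
  "seg \<alpha> = {x. x < \<alpha>}"

definition zero_ord :: "'a::wellorder" where
  "zero_ord = (LEAST x. True)"

definition succ_ord :: "'a::wellorder \<Rightarrow> 'a" where
  "succ_ord \<alpha> = (LEAST y. \<alpha> < y)"

definition is_cardinal :: "'a::wellorder \<Rightarrow> bool" where
  "is_cardinal l \<longleftrightarrow> (\<forall>\<beta><l. seg \<beta> \<prec> seg l)"

definition card_succ :: "'a::wellorder \<Rightarrow> 'a" where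
  "card_succ l = (LEAST y. seg l \<prec> seg y)"

definition regular_uncountable_limit_cardinal :: "'a::wellorder itself \<Rightarrow> bool" where
  "regular_uncountable_limit_cardinal (t::'a::wellorder itself) \<longleftrightarrow>
     (\<forall>x::'a::wellorder. seg x \<prec> (UNIV::'a::wellorder set)) \<and>
     uncountable (UNIV::'a::wellorder set) \<and>
     (\<forall>x::'a::wellorder. \<exists>y::'a. seg x \<prec> seg y) \<and>
     (\<forall>S::'a::wellorder set. (\<forall>x. \<exists>y\<in>S. x \<le> y) \<longrightarrow> S \<approx> (UNIV::'a::wellorder set))"

definition regressive_on :: "'a set \<Rightarrow> ('a::wellorder \<Rightarrow> 'a) \<Rightarrow> bool" where
  "regressive_on X f \<longleftrightarrow> (\<forall>\<alpha>\<in>X. \<alpha> \<noteq> zero_ord \<longrightarrow> f \<alpha> < \<alpha>)"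

definition J_kappa :: "'a::wellorder set set" where
  "J_kappa = {X. \<exists>(f::'a\<Rightarrow>'a) (\<theta>::'a). regressive_on X f \<and> (\<forall>\<eta>. {x\<in>X. f x = \<eta>} \<lesssim> seg \<theta>)}"

definition bounded_ord :: "'a::wellorder set \<Rightarrow> bool" where
  "bounded_ord B \<longleftrightarrow> (\<exists>\<beta>. \<forall>x\<in>B. x < \<beta>)"

definition diag_union :: "'a::wellorder set \<Rightarrow> ('a \<Rightarrow> 'a set) \<Rightarrow> 'a set" where
  "diag_union A X = {\<xi>. \<exists>\<alpha><\<xi>. \<alpha> \<in> A \<and> \<xi> \<in> X \<alpha>}"

definition prepleasant :: "'a::wellorder set set \<Rightarrow> bool" where
  "prepleasant I \<longleftrightarrow>
     (\<forall>Q\<in>I. \<forall>B::'a \<Rightarrow> 'a set. (\<forall>\<alpha>. bounded_ord (B \<alpha>)) \<longrightarrow> diag_union Q B \<in> I)"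

definition L' :: "'a::wellorder set" where
  "L' = {succ_ord l | l::'a. is_cardinal l \<and> infinite (seg l)}"

definition A_seq :: "'a::wellorder \<Rightarrow> 'a set" where
  "A_seq \<alpha> = (if \<alpha> \<in> L' then
      {x. \<alpha> < x \<and> x < card_succ (THE l::'a. is_cardinal l \<and> infinite (seg l) \<and> succ_ord l = \<alpha>)}
    else {})"

end

theory Submission
  imports Defs
begin

(* Suppose X \<in> J_kappa is witnessed by a regressive f whose fibres have size at most
  |\<theta>|, and let \<lambda> \<ge> |\<theta>| be an infinite cardinal with (\<lambda>+1, \<lambda>^+) \<subseteq> X. Since the
  interval contains every ordinal between \<lambda>+2 and any of its members, finitely many
  iterations of f bring each of its points below \<lambda>+2. Hence the interval is a countable
  union of iterated f-preimages of \<lambda>+2, each of size at most \<lambda>, although it has size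
  \<lambda>^+. The diagonal union over L' contains all these intervals, while L' itself lies in
  J_kappa via the predecessor map, whose fibres are singletons. *)

unbundle cardinal_syntax

lemma lepoll_iff_card_of_ordLeq: "A \<lesssim> B \<longleftrightarrow> |A| \<le>o |B|"
  by (simp add: lepoll_def card_of_ordLeq[symmetric])

lemma Un_lepoll_infinite:
  assumes "infinite L" "A \<lesssim> L" "B \<lesssim> L"
  shows "A \<union> B \<lesssim> L"
  using card_of_Un_ordLeq_infinite_Field[of "|L|" A B] assms
  by (simp add: lepoll_iff_card_of_ordLeq card_of_Card_order card_of_card_order_on Field_card_of)

lemma UN_lepoll_infinite:
  assumes "infinite L" "I \<lesssim> L" "\<And>i. i \<in> I \<Longrightarrow> A i \<lesssim> L"
  shows "(\<Union>i\<in>I. A i) \<lesssim> L"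
  using card_of_UNION_ordLeq_infinite[OF assms(1), of I A] assms(2,3)
  by (simp add: lepoll_iff_card_of_ordLeq)

lemma funpow_preimage_lepoll:
  fixes f :: "'a \<Rightarrow> 'a"
  assumes "infinite L" "S \<lesssim> L" "\<And>\<eta>. {x\<in>Z. f x = \<eta>} \<lesssim> L"
  shows "((\<lambda>T. Z \<inter> f -` T) ^^ n) S \<lesssim> L"
proof (induction n)
  case 0
  show ?case using assms(2) by simp
next
  case (Suc n)
  have "((\<lambda>T. Z \<inter> f -` T) ^^ Suc n) S = (\<Union>\<eta>\<in>((\<lambda>T. Z \<inter> f -` T) ^^ n) S. {x\<in>Z. f x = \<eta>})"
    by auto
  also have "\<dots> \<lesssim> L"
    by (rule UN_lepoll_infinite[OF assms(1) Suc.IH assms(3)])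
  finally show ?case .
qed

lemma regressive_descends_to_seg:
  fixes f :: "'a::wellorder \<Rightarrow> 'a"
  assumes regressive: "\<And>\<xi>. \<xi> \<in> Z \<Longrightarrow> f \<xi> < \<xi>"
    and closed: "\<And>\<xi> \<zeta>. \<xi> \<in> Z \<Longrightarrow> c \<le> \<zeta> \<Longrightarrow> \<zeta> < \<xi> \<Longrightarrow> \<zeta> \<in> Z"
  shows "Z \<subseteq> (\<Union>n. ((\<lambda>T. Z \<inter> f -` T) ^^ n) (seg c))"
proof
  fix \<xi> assume "\<xi> \<in> Z"
  then show "\<xi> \<in> (\<Union>n. ((\<lambda>T. Z \<inter> f -` T) ^^ n) (seg c))"
  proof (induction \<xi> rule: less_induct)
    case (less \<xi>)
    obtain n where "f \<xi> \<in> ((\<lambda>T. Z \<inter> f -` T) ^^ n) (seg c)"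
    proof (cases "f \<xi> < c")
      case True
      then show ?thesis using that[of 0] by (simp add: seg_def)
    next
      case False
      then have "f \<xi> \<in> Z" using closed regressive less.prems by simp
      then show ?thesis using that less.IH regressive less.prems by blast
    qed
    then have "\<xi> \<in> ((\<lambda>T. Z \<inter> f -` T) ^^ Suc n) (seg c)" using less.prems by simp
    then show ?case by blast
  qed
qed

lemma lepoll_if_regressive_small_fibres:
  fixes f :: "'a::wellorder \<Rightarrow> 'a"
  assumes "infinite L" "seg c \<lesssim> L"
    and "\<And>\<eta>. {x\<in>Z. f x = \<eta>} \<lesssim> L"
    and "\<And>\<xi>. \<xi> \<in> Z \<Longrightarrow> f \<xi> < \<xi>"
    and "\<And>\<xi> \<zeta>. \<xi> \<in> Z \<Longrightarrow> c \<le> \<zeta> \<Longrightarrow> \<zeta> < \<xi> \<Longrightarrow> \<zeta> \<in> Z"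
  shows "Z \<lesssim> L"
proof -
  have "(\<Union>n. ((\<lambda>T. Z \<inter> f -` T) ^^ n) (seg c)) \<lesssim> L"
    using assms(1) funpow_preimage_lepoll[OF assms(1-3)]
    by (intro UN_lepoll_infinite) (simp_all add: infinite_le_lepoll)
  then show ?thesis
    using regressive_descends_to_seg[of Z f c] assms(4,5) subset_imp_lepoll lepoll_trans
    by metis
qed

lemma seg_mono: "x \<le> y \<Longrightarrow> seg x \<subseteq> seg y"
  by (auto simp: seg_def)

lemma less_if_seg_lesspoll: "seg x \<prec> seg y \<Longrightarrow> x < y"
  by (meson lesspoll_trans1 lesspoll_not_refl not_le seg_mono subset_imp_lepoll)

lemma zero_ord_le: "zero_ord \<le> x"
  unfolding zero_ord_def by (rule Least_le) simp

lemma less_succ_ord: "x < y \<Longrightarrow> x < succ_ord x"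
  unfolding succ_ord_def by (rule LeastI)

lemma succ_ord_le: "x < y \<Longrightarrow> succ_ord x \<le> y"
  unfolding succ_ord_def by (rule Least_le)

lemma less_succ_ord_iff: "x < z \<Longrightarrow> y < succ_ord x \<longleftrightarrow> y \<le> x"
  by (meson le_less_trans less_succ_ord not_le succ_ord_le)

lemma seg_succ_ord: "x < z \<Longrightarrow> seg (succ_ord x) = insert x (seg x)"
  using less_succ_ord_iff by (auto simp: seg_def)

lemma succ_ord_inject: "a < x \<Longrightarrow> b < y \<Longrightarrow> succ_ord a = succ_ord b \<Longrightarrow> a = b"
  by (metis less_succ_ord_iff order.antisym order.refl)

lemma seg_lesspoll_card_succ:
  assumes "seg (l::'a::wellorder) \<prec> seg (y::'a)"
  shows "seg l \<prec> seg (card_succ l)"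
  unfolding card_succ_def using assms by (rule LeastI[of "\<lambda>y. seg l \<prec> seg y"])

lemma is_cardinal_Least_eqpoll: "is_cardinal (LEAST y::'a::wellorder. seg y \<approx> seg (m::'a))"
  unfolding is_cardinal_def
proof (intro allI impI)
  let ?l = "LEAST y::'a. seg y \<approx> seg m"
  fix \<beta> assume "\<beta> < ?l"
  then have "\<not> seg \<beta> \<approx> seg m" using not_less_Least by blast
  then have "\<not> seg \<beta> \<approx> seg ?l"
    using LeastI[of "\<lambda>y. seg y \<approx> seg m" m] eqpoll_trans by blast
  moreover have "seg \<beta> \<lesssim> seg ?l"
    using \<open>\<beta> < ?l\<close> by (simp add: seg_mono subset_imp_lepoll)
  ultimately show "seg \<beta> \<prec> seg ?l" by (simp add: lesspoll_def)
qed

lemma ex_infinite_seg: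
  assumes "uncountable (UNIV::'a::wellorder set)"
  shows "\<exists>x::'a. infinite (seg x)"
proof (rule ccontr)
  assume "\<nexists>x::'a. infinite (seg x)"
  then have "strict_mono (\<lambda>x::'a. card (seg x))"
  proof (intro strict_monoI psubset_card_mono)
    fix x y :: 'a assume "x < y"
    then show "seg x \<subset> seg y" by (auto simp: seg_def)
  qed blast
  then have "countable (UNIV::'a set)"
    by (auto simp: countable_def dest: strict_mono_imp_inj_on)
  then show False using assms by simp
qed

lemma ex_infinite_cardinal_above:
  assumes "uncountable (UNIV::'a::wellorder set)"
  shows "\<exists>l::'a. is_cardinal l \<and> infinite (seg l) \<and> seg (\<theta>::'a) \<lesssim> seg l"
proof -
  obtain x :: 'a where x: "infinite (seg x)" using ex_infinite_seg[OF assms] by blast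
  define m where "m = max x \<theta>"
  define l where "l = (LEAST y::'a. seg y \<approx> seg m)"
  have "seg m \<approx> seg l"
    unfolding l_def by (rule eqpoll_sym, rule LeastI[of _ m]) simp
  moreover have "infinite (seg m)"
    using x seg_mono[of x m] finite_subset by (auto simp: m_def)
  moreover have "seg \<theta> \<lesssim> seg m"
    using seg_mono[of \<theta> m] subset_imp_lepoll by (auto simp: m_def)
  ultimately have "infinite (seg l)" "seg \<theta> \<lesssim> seg l"
    using eqpoll_finite_iff lepoll_trans2 by blast+
  moreover have "is_cardinal l"
    unfolding l_def by (rule is_cardinal_Least_eqpoll)
  ultimately show ?thesis by blast
qed

lemma less_succ_ord_if_limit:
  fixes x :: "'a::wellorder"
  assumes "\<forall>x::'a. \<exists>y::'a. seg x \<prec> seg y"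
  shows "x < succ_ord x"
  using assms less_if_seg_lesspoll less_succ_ord by blast

lemma J_kappa_omits_successor_intervals:
  fixes X :: "'a::wellorder set"
  assumes limit: "\<forall>x::'a. \<exists>y::'a. seg x \<prec> seg y"
    and "X \<in> J_kappa"
  obtains \<theta> :: 'a where
    "\<And>l. infinite (seg l) \<Longrightarrow> seg \<theta> \<lesssim> seg l
      \<Longrightarrow> \<not> {\<xi>. succ_ord l < \<xi> \<and> \<xi> < card_succ l} \<subseteq> X"
proof -
  obtain f :: "'a \<Rightarrow> 'a" and \<theta> :: 'a where
    regressive: "regressive_on X f" and fibres: "\<And>\<eta>. {x\<in>X. f x = \<eta>} \<lesssim> seg \<theta>"
    using assms(2) unfolding J_kappa_def by blast
  have "\<not> {\<xi>. succ_ord l < \<xi> \<and> \<xi> < card_succ l} \<subseteq> X"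
    if l_inf: "infinite (seg l)" and \<theta>_l: "seg \<theta> \<lesssim> seg l" for l
  proof
    define Z where "Z = {\<xi>. succ_ord l < \<xi> \<and> \<xi> < card_succ l}"
    define c where "c = succ_ord (succ_ord l)"
    assume "Z \<subseteq> X"
    have "seg c = insert (succ_ord l) (insert l (seg l))"
      by (simp add: c_def seg_succ_ord[OF less_succ_ord_if_limit[OF limit]])
    also have "\<dots> \<lesssim> insert l (seg l)"
      by (rule infinite_insert_lepoll) (simp add: l_inf)
    also have "\<dots> \<lesssim> seg l"
      by (rule infinite_insert_lepoll[OF l_inf])
    finally have c_l: "seg c \<lesssim> seg l" .
    have "Z \<lesssim> seg l"
    proof (rule lepoll_if_regressive_small_fibres[OF l_inf c_l])
      show "{x\<in>Z. f x = \<eta>} \<lesssim> seg l" for \<eta>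
      proof -
        have "{x\<in>Z. f x = \<eta>} \<subseteq> {x\<in>X. f x = \<eta>}"
          using \<open>Z \<subseteq> X\<close> by blast
        then show ?thesis
          by (rule lepoll_trans[OF subset_imp_lepoll lepoll_trans[OF fibres \<theta>_l]])
      qed
      show "f \<xi> < \<xi>" if "\<xi> \<in> Z" for \<xi>
        using that \<open>Z \<subseteq> X\<close> regressive zero_ord_le[of "succ_ord l"]
        by (auto simp: Z_def regressive_on_def)
      show "\<zeta> \<in> Z" if "\<xi> \<in> Z" "c \<le> \<zeta>" "\<zeta> < \<xi>" for \<xi> \<zeta>
        using that less_succ_ord_if_limit[OF limit, of "succ_ord l"] by (auto simp: Z_def c_def)
    qed
    have "seg (card_succ l) \<subseteq> seg c \<union> Z"
      using less_succ_ord_if_limit[OF limit, of "succ_ord l"] by (auto simp: seg_def Z_def c_def)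
    then have "seg (card_succ l) \<lesssim> seg l"
      using Un_lepoll_infinite[OF l_inf c_l \<open>Z \<lesssim> seg l\<close>] subset_imp_lepoll lepoll_trans by blast
    moreover have "seg l \<prec> seg (card_succ l)"
      using limit seg_lesspoll_card_succ by blast
    ultimately show False
      using lesspoll_trans2 by blast
  qed
  then show thesis using that by blast
qed

lemma successor_interval_subset_diag_union:
  fixes l :: "'a::wellorder"
  assumes limit: "\<forall>x::'a. \<exists>y::'a. seg x \<prec> seg y"
    and "is_cardinal l" "infinite (seg l)"
  shows "{\<xi>. succ_ord l < \<xi> \<and> \<xi> < card_succ l} \<subseteq> diag_union L' A_seq"
proof -
  have L': "succ_ord l \<in> L'"
    using assms(2,3) by (auto simp: L'_def)
  have "(THE l'. is_cardinal l' \<and> infinite (seg l') \<and> succ_ord l' = succ_ord l) = l"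
    using assms(2,3) succ_ord_inject less_succ_ord_if_limit[OF limit]
    by (intro the_equality) blast+
  then have "A_seq (succ_ord l) = {\<xi>. succ_ord l < \<xi> \<and> \<xi> < card_succ l}"
    using L' by (simp add: A_seq_def)
  then show ?thesis
    using L' by (auto simp: diag_union_def)
qed

lemma L'_in_J_kappa:
  assumes limit: "\<forall>x::'a::wellorder. \<exists>y::'a. seg x \<prec> seg y"
  shows "(L'::'a set) \<in> J_kappa"
proof -
  define pred where "pred x = (THE l. succ_ord l = x)" for x :: 'a
  have pred_succ_ord: "pred (succ_ord l) = l" for l
    unfolding pred_def using succ_ord_inject less_succ_ord_if_limit[OF limit]
    by (intro the_equality) blast+
  define \<theta> where "\<theta> = succ_ord (zero_ord::'a)"
  have "regressive_on L' pred"
    using pred_succ_ord less_succ_ord_if_limit[OF limit]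
    by (auto simp: regressive_on_def L'_def)
  moreover have "{x\<in>L'. pred x = \<eta>} \<lesssim> seg \<theta>" for \<eta>
  proof -
    have "{x\<in>L'. pred x = \<eta>} \<subseteq> {succ_ord \<eta>}"
      using pred_succ_ord by (auto simp: L'_def)
    moreover have "{succ_ord \<eta>} \<lesssim> seg \<theta>"
      by (simp add: \<theta>_def seg_succ_ord[OF less_succ_ord_if_limit[OF limit]] singleton_lepoll)
    ultimately show ?thesis
      using subset_imp_lepoll lepoll_trans by blast
  qed
  ultimately show ?thesis
    unfolding J_kappa_def by blast
qed

lemma bounded_ord_A_seq: "bounded_ord (A_seq \<alpha>)"
  unfolding bounded_ord_def A_seq_def by auto

lemma superset_of_diag_union_notin_J_kappa:
  fixes X :: "'a::wellorder set"
  assumes "regular_uncountable_limit_cardinal TYPE('a)"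
    and "diag_union L' A_seq \<subseteq> X"
  shows "X \<notin> J_kappa"
proof
  have limit: "\<forall>x::'a. \<exists>y::'a. seg x \<prec> seg y"
    and uncountable: "uncountable (UNIV::'a set)"
    using assms(1) unfolding regular_uncountable_limit_cardinal_def by blast+
  assume "X \<in> J_kappa"
  then obtain \<theta> :: 'a where \<theta>:
    "\<And>l. infinite (seg l) \<Longrightarrow> seg \<theta> \<lesssim> seg l
      \<Longrightarrow> \<not> {\<xi>. succ_ord l < \<xi> \<and> \<xi> < card_succ l} \<subseteq> X"
    using J_kappa_omits_successor_intervals[OF limit] by blast
  obtain l :: 'a where "is_cardinal l" "infinite (seg l)" "seg \<theta> \<lesssim> seg l"
    using ex_infinite_cardinal_above[OF uncountable] by blast
  then show False
    using \<theta> successor_interval_subset_diag_union[OF limit] assms(2) by blast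
qed

theorem mainTheorem7:
  assumes "regular_uncountable_limit_cardinal TYPE('a::wellorder)"
  shows "\<not> prepleasant (J_kappa :: 'a set set)
     \<and> (L' :: 'a set) \<in> J_kappa
     \<and> (\<forall>\<alpha>\<in>(L' :: 'a set). bounded_ord (A_seq \<alpha>))
     \<and> (L' :: 'a set) \<union> diag_union L' A_seq \<notin> J_kappa"
proof -
  have L'_J: "(L' :: 'a set) \<in> J_kappa"
    using assms L'_in_J_kappa unfolding regular_uncountable_limit_cardinal_def by blast
  have "diag_union L' A_seq \<notin> (J_kappa :: 'a set set)"
    by (rule superset_of_diag_union_notin_J_kappa[OF assms subset_refl])
  then have "\<not> prepleasant (J_kappa :: 'a set set)"
    using L'_J bounded_ord_A_seq unfolding prepleasant_def by blast
  moreover have "(L' :: 'a set) \<union> diag_union L' A_seq \<notin> J_kappa"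
    by (rule superset_of_diag_union_notin_J_kappa[OF assms Un_upper2])
  ultimately show ?thesis
    using L'_J bounded_ord_A_seq by blast
qed

end
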